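(* Let $\phi$ and $\psi$ be injective endomorphisms of $F_n$. Then there is a constant $M$ such that for all distinct $\alpha_1,\alpha_2\in \mathrm{Eq}(\widehat\phi,\widehat\psi)$, setting $\alpha=\alpha_1\wedge\alpha_2$ (a finite word), the reduced form of $(\alpha\phi)^{-1}(\alpha\psi)$ has length at most $M$.
   Context: $F_n$ is the free group on a finite basis $A$; elements are identified with reduced words over $\widetilde A=A\cup A^{-1}$, $|u|$ is the length of a reduced word; maps are written on the right. For reduced (finite or infinite) words $u,v$, $u\wedge v$ is their longest common prefix. $\widehat F_n$ is the completion of $F_n$ for the prefix metric $d(u,v)=2^{-|u\wedge v|}$ ($u\ne v$), i.e. the set of all finite and infinite reduced words over $\widetilde A$. An injective endomorphism $\phi$ of $F_n$ has a unique continuous extension $\widehat\phi$ to $\widehat F_n$. For maps $f,g$ with the same domain, $\mathrm{Eq}(f,g)=\{x\mid xf=xg\}$. *)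

theory Defs
  imports Main
begin

text \<open>Letters of the free group on the finite basis of type 'a:
  (a, False) stands for the generator a, (a, True) for its inverse a^-1.\<close>
type_synonym 'a letter = "'a \<times> bool"

definition inv_letter :: "'a letter \<Rightarrow> 'a letter" where
  "inv_letter x = (fst x, \<not> snd x)"

definition reduced :: "'a letter list \<Rightarrow> bool" where
  "reduced xs \<longleftrightarrow> (\<forall>i. Suc i < length xs \<longrightarrow> xs ! Suc i \<noteq> inv_letter (xs ! i))"

fun red_cons :: "'a letter \<Rightarrow> 'a letter list \<Rightarrow> 'a letter list" where
  "red_cons x [] = [x]"
| "red_cons x (y # ys) = (if y = inv_letter x then ys else x # y # ys)"

definition reduce :: "'a letter list \<Rightarrow> 'a letter list" where
  "reduce xs = foldr red_cons xs []"

definition winv :: "'a letter list \<Rightarrow> 'a letter list" where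
  "winv xs = rev (map inv_letter xs)"

definition img_letter :: "('a \<Rightarrow> 'a letter list) \<Rightarrow> 'a letter \<Rightarrow> 'a letter list" where
  "img_letter f x = (if snd x then winv (f (fst x)) else f (fst x))"

definition endo :: "('a \<Rightarrow> 'a letter list) \<Rightarrow> 'a letter list \<Rightarrow> 'a letter list" where
  "endo f xs = reduce (concat (map (img_letter f) xs))"

definition injective_endo :: "('a \<Rightarrow> 'a letter list) \<Rightarrow> bool" where
  "injective_endo f \<longleftrightarrow> inj_on (endo f) {xs. reduced xs}"

text \<open>Elements of the completion: finite or infinite reduced words, encoded as
  sequences of optional letters (None after the end of a finite word).\<close>
definition hatF :: "(nat \<Rightarrow> 'a letter option) set" where
  "hatF = {w. (\<forall>i. w i = None \<longrightarrow> w (Suc i) = None) \<and>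
              (\<forall>i x y. w i = Some x \<longrightarrow> w (Suc i) = Some y \<longrightarrow> y \<noteq> inv_letter x)}"

definition of_list :: "'a letter list \<Rightarrow> nat \<Rightarrow> 'a letter option" where
  "of_list xs i = (if i < length xs then Some (xs ! i) else None)"

definition wtake :: "nat \<Rightarrow> (nat \<Rightarrow> 'a letter option) \<Rightarrow> 'a letter list" where
  "wtake k w = map the (takeWhile (\<lambda>x. x \<noteq> None) (map w [0..<k]))"

text \<open>The continuous extension to the completion: the limit (in the prefix
  metric) of the images of the prefixes.\<close>
definition hat :: "('a \<Rightarrow> 'a letter list) \<Rightarrow> (nat \<Rightarrow> 'a letter option) \<Rightarrow> (nat \<Rightarrow> 'a letter option)" where
  "hat f w = (THE y. y \<in> hatF \<and>
       (\<forall>n. \<exists>K. \<forall>k\<ge>K. \<forall>i<n. of_list (endo f (wtake k w)) i = y i))"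

definition Eq_hat :: "('a \<Rightarrow> 'a letter list) \<Rightarrow> ('a \<Rightarrow> 'a letter list) \<Rightarrow> (nat \<Rightarrow> 'a letter option) set" where
  "Eq_hat f g = {w \<in> hatF. hat f w = hat g w}"

definition wedge :: "(nat \<Rightarrow> 'a letter option) \<Rightarrow> (nat \<Rightarrow> 'a letter option) \<Rightarrow> 'a letter list" where
  "wedge u v = wtake (LEAST i. u i \<noteq> v i) u"

end

theory Submission
  imports Defs "HOL-Library.Sublist"
begin

text \<open>Bounded cancellation: for an injective endomorphism there is a constant C such that at
  most C letters cancel in (s^-1 phi)(t phi) whenever s^-1 t is reduced. Write
  alpha_i = alpha t_i, where t_1 and t_2 do not start with the same letter. In the tree of
  reduced words, alpha phi then lies within C of the branch point of (alpha t_1) phi and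
  (alpha t_2) phi, and likewise for psi. Since phi and psi agree on alpha_1 and alpha_2 in
  the completion, the images of long prefixes alpha t_i under phi and psi share long
  prefixes, so the two branch points coincide and alpha phi, alpha psi are within 4C of
  each other.\<close>

section \<open>Free reduction\<close>

lemma inv_letter_inv_letter [simp]: "inv_letter (inv_letter x) = x"
  by (simp add: inv_letter_def)

lemma reduced_Nil [simp]: "reduced []"
  by (simp add: reduced_def)

lemma reduced_Cons: "reduced (x # xs) \<longleftrightarrow> reduced xs \<and> (xs = [] \<or> hd xs \<noteq> inv_letter x)"
  by (cases xs) (auto simp: reduced_def nth_Cons split: nat.splits)

lemma reduced_append:
  "reduced (xs @ ys) \<longleftrightarrow> reduced xs \<and> reduced ys \<and> (xs = [] \<or> ys = [] \<or> hd ys \<noteq> inv_letter (last xs))"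
  by (induction xs) (auto simp: reduced_Cons)

lemma reduced_take: "reduced xs \<Longrightarrow> reduced (take n xs)"
  by (metis append_take_drop_id reduced_append)

lemma reduce_Nil [simp]: "reduce [] = []"
  by (simp add: reduce_def)

lemma reduce_Cons: "reduce (x # xs) = red_cons x (reduce xs)"
  by (simp add: reduce_def)

lemma reduce_append: "reduce (xs @ ys) = foldr red_cons xs (reduce ys)"
  by (simp add: reduce_def)

lemma reduced_red_cons: "reduced s \<Longrightarrow> reduced (red_cons x s)"
  by (cases s) (auto simp: reduced_Cons)

lemma reduced_foldr_red_cons: "reduced s \<Longrightarrow> reduced (foldr red_cons xs s)"
  by (induction xs) (auto intro: reduced_red_cons)

lemma reduced_reduce [simp]: "reduced (reduce xs)"
  by (simp add: reduce_def reduced_foldr_red_cons)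

lemma red_cons_eq_Cons: "s = [] \<or> hd s \<noteq> inv_letter x \<Longrightarrow> red_cons x s = x # s"
  by (cases s) auto

lemma reduce_reduced: "reduced xs \<Longrightarrow> reduce xs = xs"
  by (induction xs) (auto simp: reduce_Cons reduced_Cons red_cons_eq_Cons)

lemma length_reduce_le: "length (reduce xs) \<le> length xs"
proof (induction xs)
  case (Cons x xs)
  then show ?case by (cases "reduce xs") (auto simp: reduce_Cons)
qed simp

lemma red_cons_red_cons_inv: "reduced s \<Longrightarrow> red_cons x (red_cons (inv_letter x) s) = s"
  by (cases s) (auto simp: reduced_Cons red_cons_eq_Cons)

lemma foldr_red_cons_reduce:
  assumes "reduced s"
  shows "foldr red_cons (reduce xs) s = foldr red_cons xs s"
proof (induction xs)
  case (Cons x xs)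
  show ?case
  proof (cases "reduce xs \<noteq> [] \<and> hd (reduce xs) = inv_letter x")
    case True
    then obtain r where r: "reduce xs = inv_letter x # r"
      by (cases "reduce xs") auto
    have "foldr red_cons (x # xs) s = red_cons x (red_cons (inv_letter x) (foldr red_cons r s))"
      using Cons.IH r by simp
    also have "\<dots> = foldr red_cons r s"
      using assms by (simp add: red_cons_red_cons_inv reduced_foldr_red_cons)
    finally show ?thesis
      using r by (simp add: reduce_Cons)
  next
    case False
    then show ?thesis
      using Cons.IH by (simp add: reduce_Cons red_cons_eq_Cons)
  qed
qed simp

lemma reduce_append_reduce_left [simp]: "reduce (reduce xs @ ys) = reduce (xs @ ys)"
  by (simp add: reduce_append foldr_red_cons_reduce)

lemma reduce_append_reduce_right [simp]: "reduce (xs @ reduce ys) = reduce (xs @ ys)"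
  by (simp add: reduce_append reduce_reduced)

lemma winv_Nil [simp]: "winv [] = []"
  by (simp add: winv_def)

lemma winv_Cons: "winv (x # xs) = winv xs @ [inv_letter x]"
  by (simp add: winv_def)

lemma winv_append: "winv (xs @ ys) = winv ys @ winv xs"
  by (simp add: winv_def)

lemma winv_winv [simp]: "winv (winv xs) = xs"
  by (simp add: winv_def rev_map comp_def)

lemma length_winv [simp]: "length (winv xs) = length xs"
  by (simp add: winv_def)

lemma winv_eq_Nil_iff [simp]: "winv xs = [] \<longleftrightarrow> xs = []"
  by (simp add: winv_def)

lemma last_winv: "xs \<noteq> [] \<Longrightarrow> last (winv xs) = inv_letter (hd xs)"
  by (simp add: winv_def last_rev hd_map)

lemma drop_winv: "drop n (winv xs) = winv (take (length xs - n) xs)"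
  by (simp add: winv_def drop_rev take_map)

lemma reduce_winv_cancel: "reduce (xs @ winv p @ p @ zs) = reduce (xs @ zs)"
proof (induction p arbitrary: xs)
  case (Cons a p)
  have "reduce ([inv_letter a, a] @ ys) = reduce ys" for ys
    using red_cons_red_cons_inv[of "reduce ys" "inv_letter a"] by (simp add: reduce_Cons)
  then have "reduce (xs @ winv p @ [inv_letter a, a] @ p @ zs) = reduce (xs @ winv p @ p @ zs)"
    by (metis reduce_append)
  then show ?case
    using Cons.IH by (simp add: winv_Cons)
qed simp

lemma reduce_cancel_winv: "reduce (xs @ p @ winv p @ zs) = reduce (xs @ zs)"
  using reduce_winv_cancel[of xs "winv p" zs] by simp

lemma reduced_winv [simp]: "reduced (winv xs) \<longleftrightarrow> reduced xs"
proof -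
  have "reduced (winv xs)" if "reduced xs" for xs :: "'a letter list"
    using that
    by (induction xs) (auto simp: winv_Cons reduced_append reduced_Cons last_winv)
  then show ?thesis
    by (metis winv_winv)
qed

lemma reduce_winv_snoc:
  assumes "reduced r"
  shows "reduce (winv r @ [inv_letter x]) = winv (red_cons x r)"
proof (cases "r \<noteq> [] \<and> hd r = inv_letter x")
  case True
  then obtain r' where "r = inv_letter x # r'"
    by (cases r) auto
  then show ?thesis
    using reduce_winv_cancel[of "winv r'" "[inv_letter x]" "[]"] assms
    by (simp add: winv_Cons reduce_reduced reduced_Cons)
next
  case False
  then show ?thesis
    using assms by (simp add: red_cons_eq_Cons winv_Cons[symmetric] reduce_reduced reduced_Cons)
qed

lemma reduce_winv: "reduce (winv xs) = winv (reduce xs)"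
proof (induction xs)
  case (Cons x xs)
  have "reduce (winv (x # xs)) = reduce (reduce (winv xs) @ [inv_letter x])"
    by (simp add: winv_Cons)
  also have "\<dots> = winv (reduce (x # xs))"
    by (simp add: Cons.IH reduce_winv_snoc reduce_Cons)
  finally show ?case .
qed simp

section \<open>Common prefixes and the tree metric\<close>

abbreviation lcp_length :: "'b list \<Rightarrow> 'b list \<Rightarrow> nat" where
  "lcp_length p q \<equiv> length (longest_common_prefix p q)"

lemma longest_common_prefix_eq_Nil_iff:
  "longest_common_prefix p q = [] \<longleftrightarrow> p = [] \<or> q = [] \<or> hd p \<noteq> hd q"
  by (cases p; cases q) auto

lemma longest_common_prefix_append:
  "longest_common_prefix (r @ p) (r @ q) = r @ longest_common_prefix p q"
  by (induction r) auto

lemma take_prefix: "prefix r p \<Longrightarrow> n \<le> length r \<Longrightarrow> take n p = take n r"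
  by (auto elim!: prefixE)

lemma longest_common_prefix_decomp:
  obtains p' q' where "p = longest_common_prefix p q @ p'" "q = longest_common_prefix p q @ q'"
    "longest_common_prefix p' q' = []"
proof -
  define r where "r = longest_common_prefix p q"
  obtain p' where p': "p = r @ p'"
    using longest_common_prefix_prefix1 unfolding r_def by (rule prefixE)
  obtain q' where q': "q = r @ q'"
    using longest_common_prefix_prefix2 unfolding r_def by (rule prefixE)
  have "r @ longest_common_prefix p' q' = longest_common_prefix (r @ p') (r @ q')"
    by (rule longest_common_prefix_append[symmetric])
  also have "\<dots> = longest_common_prefix p q"
    using p' q' by simp
  finally show ?thesis
    using that p' q' unfolding r_def by simp
qed

lemma lcp_length_le: "lcp_length p q \<le> length p" "lcp_length p q \<le> length q"
  by (simp_all add: prefix_length_le longest_common_prefix_prefix1 longest_common_prefix_prefix2)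

lemma le_lcp_length_iff: "k \<le> lcp_length p q \<longleftrightarrow> k \<le> length p \<and> k \<le> length q \<and> take k p = take k q"
proof
  assume k: "k \<le> lcp_length p q"
  then have "take k p = take k q"
    using take_prefix[OF longest_common_prefix_prefix1] take_prefix[OF longest_common_prefix_prefix2]
    by metis
  with k lcp_length_le[of p q] show "k \<le> length p \<and> k \<le> length q \<and> take k p = take k q"
    by linarith
next
  assume k: "k \<le> length p \<and> k \<le> length q \<and> take k p = take k q"
  then have "prefix (take k p) (longest_common_prefix p q)"
    by (metis take_is_prefix longest_common_prefix_max_prefix)
  with k show "k \<le> lcp_length p q"
    using prefix_length_le by fastforce
qed

lemma longest_common_prefix_comm: "longest_common_prefix p q = longest_common_prefix q p"
  by (induction p q rule: longest_common_prefix.induct) (auto elim: longest_common_prefix.elims)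

lemma lcp_length_comm: "lcp_length p q = lcp_length q p"
  by (simp add: longest_common_prefix_comm)

lemma lcp_length_ultrametric: "min (lcp_length p q) (lcp_length q r) \<le> lcp_length p r"
  using le_lcp_length_iff[of "min (lcp_length p q) (lcp_length q r)"] by (metis min.cobounded1 min.cobounded2)

lemma longest_common_prefix_take:
  "longest_common_prefix (take n p) (take n q) = take n (longest_common_prefix p q)"
proof (induction p q arbitrary: n rule: longest_common_prefix.induct)
  case (1 x xs y ys)
  then show ?case by (cases n) auto
qed auto

lemma lcp_length_take: "lcp_length (take n p) (take n q) = min n (lcp_length p q)"
  by (simp add: longest_common_prefix_take)

lemma lcp_length_ge_of_take_eq:
  assumes "take n p = take n q"
  shows "min n (length p) \<le> lcp_length p q"
proof -
  have "min n (length p) = min n (length q)"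
    using arg_cong[OF assms, of length] by simp
  moreover have "take (min n (length p)) p = take (min n (length p)) q"
    using arg_cong[OF assms, of "take (min n (length p))"] by (simp add: min.absorb1)
  ultimately show ?thesis
    by (simp add: le_lcp_length_iff)
qed

lemma lcp_length_eq_of_take_eq:
  assumes "take n p = take n p'" "take n q = take n q'"
    and "lcp_length p q < n" "lcp_length p' q' < n"
  shows "lcp_length p q = lcp_length p' q'"
  using lcp_length_take[of n p q] lcp_length_take[of n p' q'] assms by simp

lemma reduced_winv_append_iff:
  "reduced (winv p @ q) \<longleftrightarrow> reduced p \<and> reduced q \<and> longest_common_prefix p q = []"
  by (auto simp: reduced_append last_winv longest_common_prefix_eq_Nil_iff)

lemma reduce_winv_append:
  assumes "reduced p" "reduced q"
  shows "reduce (winv p @ q) = winv (drop (lcp_length p q) p) @ drop (lcp_length p q) q"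
proof -
  obtain p' q' where p': "p = longest_common_prefix p q @ p'" and q': "q = longest_common_prefix p q @ q'"
    and lcp: "longest_common_prefix p' q' = []"
    by (rule longest_common_prefix_decomp)
  have "reduce (winv p @ q) = reduce (winv p' @ q')"
    using reduce_winv_cancel[of "winv p'" "longest_common_prefix p q" q']
    by (subst p', subst q') (simp add: winv_append)
  also have "\<dots> = winv p' @ q'"
    using assms lcp p' q' reduced_append reduced_winv_append_iff by (metis reduce_reduced)
  finally show ?thesis
    using p' q' by (metis append_eq_conv_conj)
qed

definition word_dist :: "'a letter list \<Rightarrow> 'a letter list \<Rightarrow> nat" where
  "word_dist p q = length (reduce (winv p @ q))"

lemma word_dist_formula:
  assumes "reduced p" "reduced q"
  shows "word_dist p q + 2 * lcp_length p q = length p + length q"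
  using reduce_winv_append[OF assms] lcp_length_le[of p q] by (simp add: word_dist_def)

lemma word_dist_sym: "word_dist p q = word_dist q p"
  using reduce_winv[of "winv p @ q"] by (simp add: word_dist_def winv_append)

lemma word_dist_triangle: "word_dist p r \<le> word_dist p q + word_dist q r"
proof -
  have "reduce (winv p @ r) = reduce (reduce (winv p @ q) @ reduce (winv q @ r))"
    using reduce_cancel_winv[of "winv p" q r] by simp
  then show ?thesis
    using length_reduce_le[of "reduce (winv p @ q) @ reduce (winv q @ r)"] by (simp add: word_dist_def)
qed

lemma word_dist_reduce_append: "word_dist (reduce (x @ p)) (reduce (x @ q)) = word_dist p q"
proof -
  have "reduce (winv (reduce (x @ p)) @ reduce (x @ q)) = reduce (winv p @ winv x @ x @ q)"
    by (simp add: reduce_winv[symmetric] winv_append)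
  then show ?thesis
    by (simp add: word_dist_def reduce_winv_cancel[of "winv p" x q, simplified])
qed

lemma length_le_word_dist: "reduced p \<Longrightarrow> reduced q \<Longrightarrow> length q \<le> length p + word_dist p q"
  using word_dist_formula[of p q] lcp_length_le[of p q] by linarith

lemma word_dist_le_of_prefix:
  assumes "reduced x" "reduced y" "reduced r" "prefix r y" "\<not> prefix r x"
  shows "word_dist x r \<le> word_dist x y"
proof -
  have "prefix (longest_common_prefix x r) y"
    using longest_common_prefix_prefix2 assms(4) by (rule prefix_order.trans)
  then have "lcp_length x r \<le> lcp_length x y"
    by (meson longest_common_prefix_max_prefix longest_common_prefix_prefix1 prefix_length_le)
  moreover have "prefix (longest_common_prefix x y) r"
    using prefix_same_cases[OF longest_common_prefix_prefix2 assms(4)] assms(5)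
    by (meson longest_common_prefix_prefix1 prefix_order.trans)
  then have "lcp_length x y \<le> lcp_length x r"
    by (meson longest_common_prefix_max_prefix longest_common_prefix_prefix1 prefix_length_le)
  moreover have "length r \<le> length y"
    using assms(4) by (rule prefix_length_le)
  ultimately show ?thesis
    using word_dist_formula[of x r] word_dist_formula[of x y] assms(1-3) by linarith
qed

lemma path_enters_prefix_near:
  assumes "\<And>i. reduced (b i)" "reduced r" "\<not> prefix r (b 0)" "prefix r (b n)"
    and "\<forall>i<n. word_dist (b i) (b (Suc i)) \<le> L"
  shows "\<exists>i<n. word_dist (b i) r \<le> L"
  using assms(4,5)
proof (induction n)
  case (Suc n)
  show ?case
  proof (cases "prefix r (b n)")
    case True
    with Suc obtain i where "i < n" "word_dist (b i) r \<le> L"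
      by auto
    then show ?thesis
      using less_SucI by blast
  next
    case False
    then have "word_dist (b n) r \<le> L"
      using word_dist_le_of_prefix[OF assms(1,1,2) Suc.prems(1)] Suc.prems(2) by (meson le_trans lessI)
    then show ?thesis
      by blast
  qed
qed (use assms(3) in simp)

section \<open>Endomorphisms and bounded cancellation\<close>

lemma img_letter_inv_letter: "img_letter f (inv_letter x) = winv (img_letter f x)"
  by (simp add: img_letter_def inv_letter_def)

lemma endo_Nil [simp]: "endo f [] = []"
  by (simp add: endo_def)

lemma reduced_endo [simp]: "reduced (endo f xs)"
  by (simp add: endo_def)

lemma endo_append: "endo f (xs @ ys) = reduce (endo f xs @ endo f ys)"
  by (simp add: endo_def)

lemma endo_winv: "endo f (winv xs) = winv (endo f xs)"
proof -
  have "concat (map (img_letter f) (winv xs)) = winv (concat (map (img_letter f) xs))"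
    by (induction xs) (simp_all add: winv_Cons winv_append img_letter_inv_letter)
  then show ?thesis
    by (simp add: endo_def reduce_winv)
qed

lemma word_dist_endo: "word_dist (endo f p) (endo f q) = length (endo f (winv p @ q))"
  by (simp add: word_dist_def endo_append endo_winv)

lemma endo_winv_cancel: "endo f (winv p @ p @ q) = endo f q"
  using reduce_winv_cancel[of "[]" "endo f p" "endo f q"]
  by (simp add: endo_append endo_winv reduce_reduced)

lemma length_endo_le:
  fixes f :: "'a::finite \<Rightarrow> 'a letter list"
  shows "length (endo f xs) \<le> Max (range (\<lambda>a. length (f a))) * length xs"
proof -
  have "length (concat (map (img_letter f) xs)) \<le> Max (range (\<lambda>a. length (f a))) * length xs"
    by (induction xs) (auto simp: img_letter_def intro!: add_mono Max_ge)
  then show ?thesis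
    unfolding endo_def using length_reduce_le order_trans by blast
qed

lemma finite_endo_ball:
  fixes f :: "'a::finite \<Rightarrow> 'a letter list"
  assumes "injective_endo f"
  shows "finite {w. reduced w \<and> length (endo f w) \<le> R}"
proof (rule finite_imageD)
  show "finite (endo f ` {w. reduced w \<and> length (endo f w) \<le> R})"
    by (rule finite_subset[OF _ finite_lists_length_le[of UNIV R]]) auto
  show "inj_on (endo f) {w. reduced w \<and> length (endo f w) \<le> R}"
    using assms unfolding injective_endo_def by (rule inj_on_subset) auto
qed

lemma endo_preimage_length_bounded:
  fixes f :: "'a::finite \<Rightarrow> 'a letter list"
  assumes "injective_endo f"
  obtains D where "\<And>w. reduced w \<Longrightarrow> length (endo f w) \<le> R \<Longrightarrow> length w \<le> D"
  using finite_endo_ball[OF assms, of R] finite_nat_set_iff_bounded_le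
  by (metis (mono_tags, lifting) finite_imageI image_eqI mem_Collect_eq)

text \<open>lcp_length (endo f s) (endo f t) is the number of letters that cancel in the product of
  the images of s^-1 and t; the hypotheses say that s^-1 t is reduced.\<close>
definition cancellation_bound :: "('a \<Rightarrow> 'a letter list) \<Rightarrow> nat \<Rightarrow> bool" where
  "cancellation_bound f C \<longleftrightarrow> (\<forall>s t. reduced s \<longrightarrow> reduced t \<longrightarrow> longest_common_prefix s t = [] \<longrightarrow>
      lcp_length (endo f s) (endo f t) \<le> C)"

lemma cancellation_bound_mono: "cancellation_bound f C \<Longrightarrow> C \<le> C' \<Longrightarrow> cancellation_bound f C'"
  unfolding cancellation_bound_def by (meson order_trans)

lemma word_dist_endo_take_Suc:
  fixes f :: "'a::finite \<Rightarrow> 'a letter list"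
  assumes "i < length s"
  shows "word_dist (endo f (take i s)) (endo f (take (Suc i) s)) \<le> Max (range (\<lambda>a. length (f a)))"
  using length_endo_le[of f "[s ! i]"] assms
  by (simp add: word_dist_endo take_Suc_conv_app_nth endo_winv_cancel[of f _ "[s ! i]", simplified])

text \<open>If the images of s and t share a long prefix r, then the images of some prefixes of s
  and t are both close to r, hence close to each other; by injectivity only finitely many
  reduced words have a short image, which bounds the lengths of those prefixes, and so the
  length of r.\<close>
lemma bounded_cancellation:
  fixes f :: "'a::finite \<Rightarrow> 'a letter list"
  assumes "injective_endo f"
  shows "\<exists>C. cancellation_bound f C"
proof -
  define L where "L = Max (range (\<lambda>a. length (f a)))"
  obtain D where D: "\<And>w. reduced w \<Longrightarrow> length (endo f w) \<le> 2 * L \<Longrightarrow> length w \<le> D"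
    using endo_preimage_length_bounded[OF assms] by blast
  have near: "\<exists>i<length s. word_dist (endo f (take i s)) r \<le> L"
    if "reduced r" "r \<noteq> []" "prefix r (endo f s)" for r s
    by (rule path_enters_prefix_near) (use that word_dist_endo_take_Suc in \<open>auto simp: L_def\<close>)
  have "lcp_length (endo f s) (endo f t) \<le> L * (D + 1)"
    if s: "reduced s" and t: "reduced t" and st: "longest_common_prefix s t = []" for s t
  proof (cases "longest_common_prefix (endo f s) (endo f t) = []")
    case False
    define r where "r = longest_common_prefix (endo f s) (endo f t)"
    have "reduced r"
      by (metis r_def longest_common_prefix_prefix1 prefixE reduced_append reduced_endo)
    then obtain i j where i: "i < length s" "word_dist (endo f (take i s)) r \<le> L"
      and j: "j < length t" "word_dist (endo f (take j t)) r \<le> L"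
      using near[of r s] near[of r t] False
      by (metis r_def longest_common_prefix_prefix1 longest_common_prefix_prefix2)
    have "prefix (longest_common_prefix (take i s) (take j t)) (longest_common_prefix s t)"
      by (meson longest_common_prefix_max_prefix longest_common_prefix_prefix1
          longest_common_prefix_prefix2 prefix_order.trans take_is_prefix)
    with s t st have "reduced (winv (take i s) @ take j t)"
      by (simp add: reduced_winv_append_iff reduced_take)
    moreover have "length (endo f (winv (take i s) @ take j t)) \<le> 2 * L"
      using word_dist_triangle[of "endo f (take i s)" "endo f (take j t)" r] i j
      by (simp add: word_dist_endo[symmetric] word_dist_sym[of r])
    ultimately have "i + j \<le> D"
      using D i(1) j(1) by fastforce
    have "length r \<le> length (endo f (take i s)) + L"
      using length_le_word_dist[OF reduced_endo[of f "take i s"] \<open>reduced r\<close>] i(2) by linarith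
    also have "\<dots> \<le> L * i + L"
      using length_endo_le[of f "take i s"] i(1) by (simp add: L_def)
    also have "\<dots> \<le> L * (D + 1)"
      using \<open>i + j \<le> D\<close> by simp
    finally show ?thesis
      by (simp add: r_def)
  qed simp
  then show ?thesis
    unfolding cancellation_bound_def by blast
qed

lemma reduce_append_eq_take_append_drop:
  assumes "reduced p" "reduced q"
  shows "reduce (p @ q) = take (length p - lcp_length (winv p) q) p @ drop (lcp_length (winv p) q) q"
  using reduce_winv_append[of "winv p" q] assms by (simp add: drop_winv)

lemma length_endo_le_lcp_length_append:
  assumes "cancellation_bound f C" "reduced (s @ t)"
  shows "length (endo f s) \<le> lcp_length (endo f s) (endo f (s @ t)) + C"
proof -
  have "longest_common_prefix (winv s) t = []"
    using assms(2) reduced_winv_append_iff[of "winv s" t] by simp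
  then have c: "lcp_length (winv (endo f s)) (endo f t) \<le> C"
    using assms reduced_append[of s t] by (auto simp: cancellation_bound_def endo_winv[symmetric])
  let ?k = "length (endo f s) - lcp_length (winv (endo f s)) (endo f t)"
  have "prefix (take ?k (endo f s)) (endo f (s @ t))"
    by (simp add: endo_append reduce_append_eq_take_append_drop)
  then have "?k \<le> lcp_length (endo f s) (endo f (s @ t))"
    by (metis length_take min.absorb2 diff_le_self prefix_length_le take_is_prefix
        longest_common_prefix_max_prefix)
  with c show ?thesis
    by linarith
qed

lemma lcp_length_reduce_append_le:
  assumes "reduced p" "reduced q"
  shows "lcp_length (reduce (x @ p)) (reduce (x @ q)) \<le> length x + lcp_length p q"
  using word_dist_formula[OF assms] word_dist_formula[of "reduce (x @ p)" "reduce (x @ q)"]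
    word_dist_reduce_append[of x p q] length_reduce_le[of "x @ p"] length_reduce_le[of "x @ q"]
  by simp

lemma lcp_length_endo_append_le:
  assumes "cancellation_bound f C" "reduced t1" "reduced t2" "longest_common_prefix t1 t2 = []"
  shows "lcp_length (endo f (s @ t1)) (endo f (s @ t2)) \<le> length (endo f s) + C"
  using lcp_length_reduce_append_le[of "endo f t1" "endo f t2" "endo f s"] assms
  by (simp add: endo_append cancellation_bound_def) (meson add_left_mono order_trans)

section \<open>The completion\<close>

lemma of_list_inject: "of_list p = of_list q \<Longrightarrow> p = q"
proof -
  assume eq: "of_list p = of_list q"
  have dom: "{i. of_list xs i \<noteq> None} = {..<length xs}" for xs :: "'a letter list"
    by (auto simp: of_list_def)
  then have "length p = length q"
    using dom[of p] dom[of q] eq by simp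
  moreover have "p ! i = q ! i" if "i < length p" for i
    using fun_cong[OF eq, of i] that \<open>length p = length q\<close> by (simp add: of_list_def)
  ultimately show "p = q"
    by (rule nth_equalityI)
qed

lemma of_list_take: "of_list (take n p) = (\<lambda>i. if i < n then of_list p i else None)"
  by (auto simp: of_list_def)

lemma take_eq_of_of_list_eq: "\<forall>i<n. of_list p i = of_list q i \<Longrightarrow> take n p = take n q"
  by (rule of_list_inject) (auto simp: of_list_take)

lemma of_list_eq_of_less_lcp_length:
  assumes "i < lcp_length p q"
  shows "of_list p i = of_list q i"
proof -
  have "take (Suc i) p = take (Suc i) q" "i < length p" "i < length q"
    using assms le_lcp_length_iff[of "Suc i" p q] by auto
  then show ?thesis
    by (metis lessI nth_take of_list_def)
qed

lemma hatF_NoneD: "\<alpha> \<in> hatF \<Longrightarrow> \<alpha> i = None \<Longrightarrow> \<alpha> (Suc i) = None"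
  by (simp add: hatF_def)

lemma hatF_SomeD: "\<alpha> \<in> hatF \<Longrightarrow> \<alpha> i = Some x \<Longrightarrow> \<alpha> (Suc i) = Some y \<Longrightarrow> y \<noteq> inv_letter x"
  unfolding hatF_def by blast

lemma of_list_in_hatF_iff: "of_list p \<in> hatF \<longleftrightarrow> reduced p"
proof
  assume h: "of_list p \<in> hatF"
  show "reduced p"
    unfolding reduced_def
  proof (intro allI impI)
    fix i
    assume "Suc i < length p"
    then have "of_list p i = Some (p ! i)" "of_list p (Suc i) = Some (p ! Suc i)"
      by (simp_all add: of_list_def)
    with h show "p ! Suc i \<noteq> inv_letter (p ! i)"
      by (rule hatF_SomeD)
  qed
next
  assume "reduced p"
  then show "of_list p \<in> hatF"
    unfolding hatF_def reduced_def of_list_def by (auto split: if_splits)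
qed

lemma hatF_None_mono: "\<alpha> \<in> hatF \<Longrightarrow> \<alpha> i = None \<Longrightarrow> i \<le> j \<Longrightarrow> \<alpha> j = None"
proof (induction j)
  case (Suc j)
  then show ?case by (cases "i = Suc j") (auto dest: hatF_NoneD)
qed simp

lemma truncation_in_hatF: "\<alpha> \<in> hatF \<Longrightarrow> (\<lambda>i. if i < k then \<alpha> i else None) \<in> hatF"
  by (auto simp: hatF_def)

lemma of_list_wtake:
  assumes "\<alpha> \<in> hatF"
  shows "of_list (wtake k \<alpha>) = (\<lambda>i. if i < k then \<alpha> i else None)"
proof
  fix i
  define xs where "xs = map \<alpha> [0..<k]"
  define ys where "ys = takeWhile (\<lambda>x. x \<noteq> None) xs"
  have xs: "length xs = k" "\<And>j. j < k \<Longrightarrow> xs ! j = \<alpha> j"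
    by (simp_all add: xs_def)
  have wtake: "wtake k \<alpha> = map the ys"
    by (simp add: wtake_def xs_def ys_def)
  have "length ys \<le> k"
    using length_takeWhile_le[of _ xs] xs(1) unfolding ys_def by simp
  show "of_list (wtake k \<alpha>) i = (if i < k then \<alpha> i else None)"
  proof (cases "i < length ys")
    case True
    then have "ys ! i = xs ! i"
      unfolding ys_def by (rule takeWhile_nth)
    moreover have "ys ! i \<noteq> None"
      using nth_mem[OF True] unfolding ys_def by (blast dest: set_takeWhileD)
    ultimately show ?thesis
      using True \<open>length ys \<le> k\<close> xs(2) by (simp add: of_list_def wtake)
  next
    case False
    have "\<alpha> i = None" if "i < k"
    proof -
      have "length ys < length xs"
        using False that xs(1) by simp
      then have "xs ! length ys = None"
        unfolding ys_def using nth_length_takeWhile by blast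
      then have "\<alpha> (length ys) = None"
        using \<open>length ys < length xs\<close> xs by simp
      with False show ?thesis
        using hatF_None_mono[OF assms] by simp
    qed
    with False show ?thesis
      by (simp add: of_list_def wtake)
  qed
qed

lemma reduced_wtake: "\<alpha> \<in> hatF \<Longrightarrow> reduced (wtake k \<alpha>)"
  by (simp add: of_list_in_hatF_iff[symmetric] of_list_wtake truncation_in_hatF)

lemma take_wtake: "\<alpha> \<in> hatF \<Longrightarrow> k \<le> k' \<Longrightarrow> take k (wtake k' \<alpha>) = wtake k \<alpha>"
  by (rule of_list_inject) (auto simp: of_list_take of_list_wtake)

lemma wtake_eq_of_None:
  assumes "\<alpha> \<in> hatF" "\<alpha> m = None" "m \<le> k"
  shows "wtake k \<alpha> = wtake m \<alpha>"
proof (rule of_list_inject, rule ext)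
  fix i
  show "of_list (wtake k \<alpha>) i = of_list (wtake m \<alpha>) i"
    using hatF_None_mono[OF assms(1,2), of i] assms(3) by (auto simp: of_list_wtake[OF assms(1)])
qed

lemma length_wtake_of_total:
  assumes "\<forall>i. \<alpha> i \<noteq> None"
  shows "length (wtake k \<alpha>) = k"
proof -
  have "takeWhile (\<lambda>x. x \<noteq> None) (map \<alpha> [0..<k]) = map \<alpha> [0..<k]"
    using assms by (simp del: not_None_eq)
  then show ?thesis
    by (simp only: wtake_def) simp
qed

definition limit_of :: "(nat \<Rightarrow> 'a letter list) \<Rightarrow> (nat \<Rightarrow> 'a letter option) \<Rightarrow> bool" where
  "limit_of p y \<longleftrightarrow> (\<forall>i. \<forall>\<^sub>F k in sequentially. of_list (p k) i = y i)"

lemma limit_of_iff: "limit_of p y \<longleftrightarrow> (\<forall>n. \<exists>K. \<forall>k\<ge>K. \<forall>i<n. of_list (p k) i = y i)"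
proof -
  have "limit_of p y \<longleftrightarrow> (\<forall>n. \<forall>i<n. \<forall>\<^sub>F k in sequentially. of_list (p k) i = y i)"
    unfolding limit_of_def using lessI by blast
  also have "\<dots> \<longleftrightarrow> (\<forall>n. \<forall>\<^sub>F k in sequentially. \<forall>i<n. of_list (p k) i = y i)"
    using eventually_ball_finite_distrib[of "{..<_}" "\<lambda>k i. of_list (p k) i = y i" sequentially]
    by (simp add: Ball_def)
  also have "\<dots> \<longleftrightarrow> (\<forall>n. \<exists>K. \<forall>k\<ge>K. \<forall>i<n. of_list (p k) i = y i)"
    by (simp only: eventually_sequentially)
  finally show ?thesis .
qed

lemma hat_eq_The: "hat f w = (THE y. y \<in> hatF \<and> limit_of (\<lambda>k. endo f (wtake k w)) y)"
  by (simp add: hat_def limit_of_iff)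

lemma limit_of_unique: "limit_of p y \<Longrightarrow> limit_of p y' \<Longrightarrow> y = y'"
proof
  fix i
  assume "limit_of p y" "limit_of p y'"
  then have "\<forall>\<^sub>F k in sequentially. of_list (p k) i = y i \<and> of_list (p k) i = y' i"
    unfolding limit_of_def by (simp add: eventually_conj_iff)
  then have "\<forall>\<^sub>F k in sequentially. y i = y' i"
    by (rule eventually_mono) auto
  then show "y i = y' i"
    by simp
qed

lemma limit_of_in_hatF:
  assumes "\<And>k. reduced (p k)" "limit_of p y"
  shows "y \<in> hatF"
proof -
  have "\<forall>\<^sub>F k in sequentially. of_list (p k) i = y i \<and> of_list (p k) (Suc i) = y (Suc i)" for i
    using assms(2) unfolding limit_of_def by (simp add: eventually_conj_iff)
  then have agree: "\<exists>k. of_list (p k) i = y i \<and> of_list (p k) (Suc i) = y (Suc i)" for i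
    by (rule eventually_happens'[OF sequentially_bot])
  have hat: "of_list (p k) \<in> hatF" for k
    using assms(1) of_list_in_hatF_iff by blast
  show ?thesis
    unfolding hatF_def mem_Collect_eq
  proof (intro conjI allI impI)
    fix i
    assume "y i = None"
    obtain k where "of_list (p k) i = y i" "of_list (p k) (Suc i) = y (Suc i)"
      using agree by blast
    with \<open>y i = None\<close> hatF_NoneD[OF hat, of k i] show "y (Suc i) = None"
      by simp
  next
    fix i x z
    assume "y i = Some x" "y (Suc i) = Some z"
    obtain k where "of_list (p k) i = y i" "of_list (p k) (Suc i) = y (Suc i)"
      using agree by blast
    with \<open>y i = Some x\<close> \<open>y (Suc i) = Some z\<close> hatF_SomeD[OF hat, of k i x z]
    show "z \<noteq> inv_letter x"
      by simp
  qed
qed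

lemma limit_of_eventually_const: "\<forall>\<^sub>F k in sequentially. p k = q \<Longrightarrow> limit_of p (of_list q)"
  unfolding limit_of_def by (auto elim: eventually_mono)

lemma limit_of_stable_prefixes:
  assumes stable: "\<And>k k'. k \<le> k' \<Longrightarrow> length (p k) \<le> lcp_length (p k) (p k') + C"
    and unbounded: "\<And>R. \<exists>k. R \<le> length (p k)"
  shows "\<exists>y. limit_of p y"
proof -
  define K where "K i = (SOME k. Suc i + C \<le> length (p k))" for i
  have K: "Suc i + C \<le> length (p (K i))" for i
    unfolding K_def by (rule someI_ex) (rule unbounded)
  have "\<forall>\<^sub>F k in sequentially. of_list (p k) i = of_list (p (K i)) i" for i
  proof (rule eventually_sequentiallyI)
    fix k
    assume "K i \<le> k"
    then have "i < lcp_length (p (K i)) (p k)"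
      using stable[of "K i" k] K[of i] by linarith
    then show "of_list (p k) i = of_list (p (K i)) i"
      by (simp add: of_list_eq_of_less_lcp_length)
  qed
  then have "limit_of p (\<lambda>i. of_list (p (K i)) i)"
    unfolding limit_of_def by simp
  then show ?thesis
    by blast
qed

lemma endo_wtake_convergent:
  fixes f :: "'a::finite \<Rightarrow> 'a letter list"
  assumes inj: "injective_endo f" and \<alpha>: "\<alpha> \<in> hatF"
  shows "\<exists>y. limit_of (\<lambda>k. endo f (wtake k \<alpha>)) y"
proof (cases "\<exists>m. \<alpha> m = None")
  case True
  then obtain m where m: "\<alpha> m = None"
    by blast
  have "\<forall>\<^sub>F k in sequentially. endo f (wtake k \<alpha>) = endo f (wtake m \<alpha>)"
  proof (rule eventually_sequentiallyI)
    fix k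
    assume "m \<le> k"
    show "endo f (wtake k \<alpha>) = endo f (wtake m \<alpha>)"
      by (rule arg_cong[OF wtake_eq_of_None[OF \<alpha> m \<open>m \<le> k\<close>]])
  qed
  then have "limit_of (\<lambda>k. endo f (wtake k \<alpha>)) (of_list (endo f (wtake m \<alpha>)))"
    by (rule limit_of_eventually_const)
  then show ?thesis
    by blast
next
  case False
  obtain C where C: "cancellation_bound f C"
    using bounded_cancellation[OF inj] by blast
  show ?thesis
  proof (rule limit_of_stable_prefixes[where C = C])
    fix k k' :: nat
    assume "k \<le> k'"
    then have split: "wtake k \<alpha> @ drop k (wtake k' \<alpha>) = wtake k' \<alpha>"
      using append_take_drop_id[of k "wtake k' \<alpha>"] by (simp add: take_wtake[OF \<alpha>])
    show "length (endo f (wtake k \<alpha>)) \<le> lcp_length (endo f (wtake k \<alpha>)) (endo f (wtake k' \<alpha>)) + C"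
      using length_endo_le_lcp_length_append[OF C, of "wtake k \<alpha>" "drop k (wtake k' \<alpha>)", unfolded split]
        reduced_wtake[OF \<alpha>, of k'] by blast
  next
    fix R
    obtain D where D: "\<And>w. reduced w \<Longrightarrow> length (endo f w) \<le> R \<Longrightarrow> length w \<le> D"
      using endo_preimage_length_bounded[OF inj] by blast
    have "\<forall>i. \<alpha> i \<noteq> None"
      using False by auto
    then have "\<not> length (endo f (wtake (Suc D) \<alpha>)) \<le> R"
      using D[OF reduced_wtake[OF \<alpha>, of "Suc D"]] length_wtake_of_total[of \<alpha> "Suc D"] by auto
    then show "\<exists>k. R \<le> length (endo f (wtake k \<alpha>))"
      by (intro exI[of _ "Suc D"]) simp
  qed
qed

lemma hat_limit:
  fixes f :: "'a::finite \<Rightarrow> 'a letter list"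
  assumes "injective_endo f" "\<alpha> \<in> hatF"
  shows "limit_of (\<lambda>k. endo f (wtake k \<alpha>)) (hat f \<alpha>)"
proof -
  obtain y where y: "limit_of (\<lambda>k. endo f (wtake k \<alpha>)) y"
    using endo_wtake_convergent[OF assms] by blast
  moreover have "y \<in> hatF"
    by (rule limit_of_in_hatF[OF _ y]) simp
  ultimately have "hat f \<alpha> = y"
    unfolding hat_eq_The using limit_of_unique by (intro the_equality) blast+
  with y show ?thesis
    by simp
qed

lemma Eq_hat_eventually_take_eq:
  fixes f g :: "'a::finite \<Rightarrow> 'a letter list"
  assumes "injective_endo f" "injective_endo g" "\<alpha> \<in> Eq_hat f g"
  shows "\<forall>\<^sub>F k in sequentially. take N (endo f (wtake k \<alpha>)) = take N (endo g (wtake k \<alpha>))"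
proof -
  have \<alpha>: "\<alpha> \<in> hatF" "hat f \<alpha> = hat g \<alpha>"
    using assms(3) by (simp_all add: Eq_hat_def)
  obtain K1 where K1: "\<forall>k\<ge>K1. \<forall>i<N. of_list (endo f (wtake k \<alpha>)) i = hat f \<alpha> i"
    using hat_limit[OF assms(1) \<alpha>(1)] unfolding limit_of_iff by blast
  obtain K2 where K2: "\<forall>k\<ge>K2. \<forall>i<N. of_list (endo g (wtake k \<alpha>)) i = hat g \<alpha> i"
    using hat_limit[OF assms(2) \<alpha>(1)] unfolding limit_of_iff by blast
  show ?thesis
  proof (rule eventually_sequentiallyI)
    fix k
    assume "max K1 K2 \<le> k"
    with K1 K2 \<alpha>(2) show "take N (endo f (wtake k \<alpha>)) = take N (endo g (wtake k \<alpha>))"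
      by (intro take_eq_of_of_list_eq) simp
  qed
qed

lemma of_list_drop: "of_list (drop n p) i = of_list p (n + i)"
  by (cases "n \<le> length p") (auto simp: of_list_def)

lemma longest_common_prefix_eq_Nil_of_of_list:
  "of_list p 0 \<noteq> of_list q 0 \<Longrightarrow> longest_common_prefix p q = []"
  by (cases p; cases q) (auto simp: of_list_def)

lemma wedge_eventually_decomp:
  assumes \<alpha>: "\<alpha>1 \<in> hatF" "\<alpha>2 \<in> hatF" and "\<alpha>1 \<noteq> \<alpha>2"
  shows "\<forall>\<^sub>F k in sequentially. \<exists>t1 t2. wtake k \<alpha>1 = wedge \<alpha>1 \<alpha>2 @ t1 \<and> wtake k \<alpha>2 = wedge \<alpha>1 \<alpha>2 @ t2
           \<and> longest_common_prefix t1 t2 = []"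
proof (rule eventually_sequentiallyI)
  define m where "m = (LEAST i. \<alpha>1 i \<noteq> \<alpha>2 i)"
  have "\<exists>i. \<alpha>1 i \<noteq> \<alpha>2 i"
    using \<open>\<alpha>1 \<noteq> \<alpha>2\<close> by auto
  then have "\<alpha>1 m \<noteq> \<alpha>2 m"
    unfolding m_def by (rule LeastI_ex)
  have wedge1: "wedge \<alpha>1 \<alpha>2 = wtake m \<alpha>1"
    by (simp add: wedge_def m_def)
  also have "\<dots> = wtake m \<alpha>2"
  proof (rule of_list_inject, rule ext)
    fix i
    show "of_list (wtake m \<alpha>1) i = of_list (wtake m \<alpha>2) i"
      using not_less_Least[of i "\<lambda>i. \<alpha>1 i \<noteq> \<alpha>2 i"] by (simp add: of_list_wtake \<alpha> m_def)
  qed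
  finally have wedge2: "wedge \<alpha>1 \<alpha>2 = wtake m \<alpha>2" .
  fix k
  assume "Suc m \<le> k"
  then have split: "wtake k \<alpha> = wtake m \<alpha> @ drop m (wtake k \<alpha>)"
    and head: "of_list (drop m (wtake k \<alpha>)) 0 = \<alpha> m" if "\<alpha> \<in> hatF" for \<alpha>
    using take_wtake[OF that, of m k] append_take_drop_id[of m "wtake k \<alpha>"]
    by (simp_all add: of_list_drop of_list_wtake[OF that])
  show "\<exists>t1 t2. wtake k \<alpha>1 = wedge \<alpha>1 \<alpha>2 @ t1 \<and> wtake k \<alpha>2 = wedge \<alpha>1 \<alpha>2 @ t2
           \<and> longest_common_prefix t1 t2 = []"
  proof (intro exI conjI)
    show "wtake k \<alpha>1 = wedge \<alpha>1 \<alpha>2 @ drop m (wtake k \<alpha>1)"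
      by (subst wedge1) (rule split[OF \<alpha>(1)])
    show "wtake k \<alpha>2 = wedge \<alpha>1 \<alpha>2 @ drop m (wtake k \<alpha>2)"
      by (subst wedge2) (rule split[OF \<alpha>(2)])
    show "longest_common_prefix (drop m (wtake k \<alpha>1)) (drop m (wtake k \<alpha>2)) = []"
      using head[OF \<alpha>(1)] head[OF \<alpha>(2)] \<open>\<alpha>1 m \<noteq> \<alpha>2 m\<close>
      by (intro longest_common_prefix_eq_Nil_of_of_list) simp
  qed
qed

section \<open>Equalizers of the extensions\<close>

text \<open>In the tree of reduced words, x lies within C of the branch point of u1 and u2, and y
  within C of that of v1 and v2. The u's and v's agree far beyond these branch points, so the
  two branch points coincide: the depths of x and y differ by at most 2C, and x and y share
  all but C letters of the shorter one.\<close>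
lemma lcp_length_of_branch_points:
  assumes xu: "length x \<le> lcp_length x u1 + C" "length x \<le> lcp_length x u2 + C"
      "lcp_length u1 u2 \<le> length x + C"
    and yv: "length y \<le> lcp_length y v1 + C" "length y \<le> lcp_length y v2 + C"
      "lcp_length v1 v2 \<le> length y + C"
    and N: "length x + length y + 2 * C < N"
    and agree: "take N u1 = take N v1" "take N u2 = take N v2"
  shows "length x + length y \<le> 2 * lcp_length x y + 4 * C"
proof -
  have "length x \<le> lcp_length u1 u2 + C"
    using lcp_length_ultrametric[of u1 x u2] lcp_length_comm[of u1 x] xu(1,2) by linarith
  moreover have "length y \<le> lcp_length v1 v2 + C"
    using lcp_length_ultrametric[of v1 y v2] lcp_length_comm[of v1 y] yv(1,2) by linarith
  moreover have "lcp_length u1 u2 = lcp_length v1 v2"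
    by (rule lcp_length_eq_of_take_eq[OF agree]) (use xu(3) yv(3) N in linarith)+
  moreover have "length x \<le> lcp_length u1 v1 + C"
    using lcp_length_ge_of_take_eq[OF agree(1)] lcp_length_le(2)[of x u1] xu(1) N by linarith
  then have "length x \<le> lcp_length x y + C \<or> length y \<le> lcp_length x y + C"
    using lcp_length_ultrametric[of x u1 y] lcp_length_ultrametric[of u1 v1 y]
      lcp_length_comm[of v1 y] xu(1) yv(1) by linarith
  ultimately show ?thesis
    using xu(3) yv(3) lcp_length_le[of x y] by linarith
qed

lemma word_dist_endo_le_of_agreement:
  assumes f: "cancellation_bound f C" and g: "cancellation_bound g C"
    and r: "reduced (\<alpha> @ t1)" "reduced (\<alpha> @ t2)" and t: "longest_common_prefix t1 t2 = []"
    and N: "length (endo f \<alpha>) + length (endo g \<alpha>) + 2 * C < N"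
    and agree: "take N (endo f (\<alpha> @ t1)) = take N (endo g (\<alpha> @ t1))"
      "take N (endo f (\<alpha> @ t2)) = take N (endo g (\<alpha> @ t2))"
  shows "word_dist (endo f \<alpha>) (endo g \<alpha>) \<le> 4 * C"
proof -
  have "reduced t1" "reduced t2"
    using r reduced_append by blast+
  note branch = length_endo_le_lcp_length_append[OF _ r(1)] length_endo_le_lcp_length_append[OF _ r(2)]
    lcp_length_endo_append_le[OF _ \<open>reduced t1\<close> \<open>reduced t2\<close> t]
  have "length (endo f \<alpha>) + length (endo g \<alpha>) \<le> 2 * lcp_length (endo f \<alpha>) (endo g \<alpha>) + 4 * C"
    by (rule lcp_length_of_branch_points[OF branch[OF f] branch[OF g] N agree])
  then show ?thesis
    using word_dist_formula[of "endo f \<alpha>" "endo g \<alpha>"] by simp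
qed

lemma word_dist_endo_wedge_le:
  fixes f g :: "'a::finite \<Rightarrow> 'a letter list"
  assumes inj: "injective_endo f" "injective_endo g"
    and f: "cancellation_bound f C" and g: "cancellation_bound g C"
    and e: "\<alpha>1 \<in> Eq_hat f g" "\<alpha>2 \<in> Eq_hat f g" and "\<alpha>1 \<noteq> \<alpha>2"
  shows "word_dist (endo f (wedge \<alpha>1 \<alpha>2)) (endo g (wedge \<alpha>1 \<alpha>2)) \<le> 4 * C"
proof -
  let ?\<alpha> = "wedge \<alpha>1 \<alpha>2"
  let ?N = "length (endo f ?\<alpha>) + length (endo g ?\<alpha>) + 2 * C + 1"
  have "\<alpha>1 \<in> hatF" "\<alpha>2 \<in> hatF"
    using e by (simp_all add: Eq_hat_def)
  then have "\<forall>\<^sub>F k in sequentially.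
      take ?N (endo f (wtake k \<alpha>1)) = take ?N (endo g (wtake k \<alpha>1)) \<and>
      take ?N (endo f (wtake k \<alpha>2)) = take ?N (endo g (wtake k \<alpha>2)) \<and>
      (\<exists>t1 t2. wtake k \<alpha>1 = ?\<alpha> @ t1 \<and> wtake k \<alpha>2 = ?\<alpha> @ t2 \<and> longest_common_prefix t1 t2 = [])"
    using Eq_hat_eventually_take_eq[OF inj e(1)] Eq_hat_eventually_take_eq[OF inj e(2)]
      wedge_eventually_decomp \<open>\<alpha>1 \<noteq> \<alpha>2\<close> by (simp add: eventually_conj_iff)
  from eventually_happens'[OF sequentially_bot this]
  obtain k t1 t2 where agree: "take ?N (endo f (wtake k \<alpha>1)) = take ?N (endo g (wtake k \<alpha>1))"
      "take ?N (endo f (wtake k \<alpha>2)) = take ?N (endo g (wtake k \<alpha>2))"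
    and split: "wtake k \<alpha>1 = ?\<alpha> @ t1" "wtake k \<alpha>2 = ?\<alpha> @ t2"
    and t: "longest_common_prefix t1 t2 = []"
    by blast
  moreover have "reduced (?\<alpha> @ t1)" "reduced (?\<alpha> @ t2)"
    using reduced_wtake[OF \<open>\<alpha>1 \<in> hatF\<close>, of k] reduced_wtake[OF \<open>\<alpha>2 \<in> hatF\<close>, of k] split by simp_all
  ultimately show ?thesis
    by (intro word_dist_endo_le_of_agreement[OF f g _ _ t, where N = ?N]) simp_all
qed

theorem lemma2p2:
  fixes f g :: "'a::finite \<Rightarrow> 'a letter list"
  assumes "injective_endo f" and "injective_endo g"
  shows "\<exists>M::nat. \<forall>\<alpha>1 \<alpha>2. \<alpha>1 \<in> Eq_hat f g \<longrightarrow> \<alpha>2 \<in> Eq_hat f g \<longrightarrow> \<alpha>1 \<noteq> \<alpha>2 \<longrightarrow>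
           length (reduce (winv (endo f (wedge \<alpha>1 \<alpha>2)) @ endo g (wedge \<alpha>1 \<alpha>2))) \<le> M"
proof -
  obtain Cf Cg where "cancellation_bound f Cf" "cancellation_bound g Cg"
    using bounded_cancellation[OF assms(1)] bounded_cancellation[OF assms(2)] by blast
  then obtain C where "cancellation_bound f C" "cancellation_bound g C"
    using cancellation_bound_mono[of f Cf "max Cf Cg"] cancellation_bound_mono[of g Cg "max Cf Cg"] by auto
  with word_dist_endo_wedge_le[OF assms] show ?thesis
    unfolding word_dist_def by blast
qed

end
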